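(* Let $H=(v_1,\dots,v_6)$ be an embedded equilateral hexagon in standard position whose action-angle coordinates $(d_1,d_2,d_3,\theta_1,\theta_2,\theta_3)$ for the $T_{135}$ triangulation are defined, and let $d=\sqrt{2d_1^2d_2^2+2d_1^2d_3^2+2d_2^2d_3^2-d_1^4-d_2^4-d_3^4}$. If $J(H)=(-1,1)$, then $f_i<0$, $g_i>0$ and $h_i>0$ for all $i\in\{1,2,3\}$, where \begin{align*} f_1= & d_2\sqrt{4-d_2^2}\sin\theta_2\big(d_3d-(d_1^2-d_2^2+d_3^2)\sqrt{4-d_3^2}\cos\theta_3\big)- d_3\sqrt{4-d_3^2}\sin\theta_3\big(d_2d-(d_1^2+d_2^2-d_3^2)\sqrt{4-d_2^2}\cos\theta_2\big),\\ g_1= & \sqrt{4-d_2^2}\Big(\tfrac{-d_1^2+d_2^2+d_3^2}{2d_2 d_3}\cos\theta_2\sin\theta_3+\sin\theta_2\cos\theta_3\Big)-\tfrac{d\sin\theta_3}{2d_3},\\ h_1= & \sqrt{4-d_3^2}\Big(\tfrac{-d_1^2+d_2^2+d_3^2}{2d_2 d_3}\cos\theta_3\sin\theta_2+\sin\theta_3\cos\theta_2\Big)-\tfrac{d\sin\theta_2}{2d_2},\\ f_2 = & d_3\sqrt{4-d_3^2}\sin\theta_3\big(d_1d-(d_1^2+d_2^2-d_3^2)\sqrt{4-d_1^2}\cos\theta_1\big)- d_1\sqrt{4-d_1^2}\sin\theta_1\big(d_3d-(-d_1^2+d_2^2+d_3^2)\sqrt{4-d_3^2}\cos\theta_3\big),\\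 g_2 = &\sqrt{4-d_3^2}\Big(\tfrac{d_1^2-d_2^2+d_3^2}{2d_1 d_3}\cos\theta_3\sin\theta_1+\sin\theta_3\cos\theta_1\Big)-\tfrac{d\sin\theta_1}{2d_1},\\ h_2 = &\sqrt{4-d_1^2}\Big(\tfrac{d_1^2-d_2^2+d_3^2}{2d_1 d_3}\cos\theta_1\sin\theta_3+\sin\theta_1\cos\theta_3\Big)-\tfrac{d\sin\theta_3}{2d_3},\\ f_3 = & d_1\sqrt{4-d_1^2}\sin\theta_1\big(d_2d-(-d_1^2+d_2^2+d_3^2)\sqrt{4-d_2^2}\cos\theta_2\big)-d_2\sqrt{4-d_2^2}\sin\theta_2\big(d_1d-(d_1^2-d_2^2+d_3^2)\sqrt{4-d_1^2}\cos\theta_1\big),\\ g_3 = &\sqrt{4-d_1^2}\Big(\tfrac{d_1^2+d_2^2-d_3^2}{2d_1 d_2}\cos\theta_1\sin\theta_2+\sin\theta_1\cos\theta_2\Big)-\tfrac{d\sin\theta_2}{2d_2},\\ h_3 = &\sqrt{4-d_2^2}\Big( \tfrac{d_1^2+d_2^2-d_3^2}{2d_1 d_2}\cos\theta_2\sin\theta_1+\sin\theta_2\cos\theta_1\Big)-\tfrac{d\sin\theta_1}{2d_1}. \end{align*}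
   Context: An equilateral hexagon is an ordered 6-tuple $H=(v_1,\dots,v_6)$ in $\mathbb{R}^3$ with $\|v_i-v_{i+1}\|=1$ (indices mod 6), edges $e_i=[v_i,v_{i+1}]$, oriented $v_1\to v_2\to\cdots\to v_6\to v_1$; embedded means non-adjacent edges are disjoint and adjacent ones meet only at their common endpoint. Standard position: $v_1=0$, $v_3$ on the positive $x$-axis, $v_5$ in the $xy$-plane with positive $y$-coordinate. Action-angle coordinates ($T_{135}$ triangulation), defined when $v_1,v_3,v_5$ are not collinear and $0<d_i<2$: $d_1=\|v_3-v_1\|$, $d_2=\|v_5-v_3\|$, $d_3=\|v_1-v_5\|$; with $m_1,m_2,m_3$ the midpoints of $[v_1,v_3],[v_3,v_5],[v_5,v_1]$, $u_1,u_2,u_3$ the unit vectors in the $xy$-plane perpendicular to these segments pointing toward the opposite vertex of triangle $v_1v_3v_5$ (toward $v_5,v_1,v_3$ respectively), and $e_z=(0,0,1)$, the angles $\theta_i\in[0,2\pi)$ are determined by $v_{2i}=m_i+\tfrac12\sqrt{4-d_i^2}(\cos\theta_i\,u_i+\sin\theta_i\,e_z)$ (regular planar hexagon: all $\theta_i=\pi$). Explicitly $v_3=(d_1,0,0)$, $v_5=\big(\tfrac{d_1^2-d_2^2+d_3^2}{2d_1},\tfrac{d}{2d_1},0\big)$, $v_2=\big(\tfrac{d_1}{2},\tfrac12\sqrt{4-d_1^2}\cos\theta_1,\tfrac12\sqrt{4-d_1^2}\sin\theta_1\big)$. Joint Chirality-Curl: $curl(H)=\operatorname{sign}\big((v_3-v_1)\times(v_5-v_1)\cdot(v_2-v_1)\big)$.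 For $i=2,4,6$, $T_i$ is the open triangular disk with vertices $v_{i-1},v_i,v_{i+1}$, oriented by the right-hand rule (normal $(v_i-v_{i-1})\times(v_{i+1}-v_i)$), and $\Delta_i$ is the algebraic intersection number of $T_i$ with the oriented polygon $H$. Then $J(H)=(\Delta_2\Delta_4\Delta_6,\ \Delta_2^2\Delta_4^2\Delta_6^2\,curl(H))$. *)

theory Defs
  imports "HOL-Analysis.Analysis" "HOL-Analysis.Cross3"
begin

text \<open>A hexagon is given by a function v :: nat => real^3; the vertices are
  v 1, ..., v 6.  Cyclic indexing: vx v i is v_i with indices taken mod 6
  (vx v 0 = v 6, vx v 7 = v 1).\<close>

definition vx :: "(nat \<Rightarrow> real^3) \<Rightarrow> nat \<Rightarrow> real^3" where
  "vx v i = v (((i + 5) mod 6) + 1)"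

definition edge :: "(nat \<Rightarrow> real^3) \<Rightarrow> nat \<Rightarrow> (real^3) set" where
  "edge v i = closed_segment (vx v i) (vx v (i + 1))"

definition equilateral_hex :: "(nat \<Rightarrow> real^3) \<Rightarrow> bool" where
  "equilateral_hex v \<longleftrightarrow> (\<forall>i\<in>{1..6}. dist (vx v i) (vx v (i + 1)) = 1)"

definition embedded_hex :: "(nat \<Rightarrow> real^3) \<Rightarrow> bool" where
  "embedded_hex v \<longleftrightarrow>
     (\<forall>i\<in>{1..6}. \<forall>j\<in>{1..6}. i \<noteq> j \<longrightarrow>
        (if j = i mod 6 + 1 then edge v i \<inter> edge v j = {vx v j}
         else if i = j mod 6 + 1 then edge v i \<inter> edge v j = {vx v i}
         else edge v i \<inter> edge v j = {}))"

definition standard_position :: "(nat \<Rightarrow> real^3) \<Rightarrow> bool" where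
  "standard_position v \<longleftrightarrow>
     v 1 = 0 \<and> (v 3)$1 > 0 \<and> (v 3)$2 = 0 \<and> (v 3)$3 = 0 \<and>
     (v 5)$3 = 0 \<and> (v 5)$2 > 0"

definition perp_toward :: "real^3 \<Rightarrow> real^3 \<Rightarrow> real^3 \<Rightarrow> real^3" where
  "perp_toward a b c =
     (let w = (c - a) - (((c - a) \<bullet> (b - a)) / ((b - a) \<bullet> (b - a))) *\<^sub>R (b - a)
      in (1 / norm w) *\<^sub>R w)"

definition ez :: "real^3" where
  "ez = vector [0, 0, 1]"

definition angle_coord ::
  "real^3 \<Rightarrow> real^3 \<Rightarrow> real^3 \<Rightarrow> real^3 \<Rightarrow> real \<Rightarrow> real \<Rightarrow> bool" where
  "angle_coord a b c w di th \<longleftrightarrow>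
     0 \<le> th \<and> th < 2 * pi \<and>
     w = midpoint a b + (sqrt (4 - di\<^sup>2) / 2) *\<^sub>R
            (cos th *\<^sub>R perp_toward a b c + sin th *\<^sub>R ez)"

definition sgn_int :: "real \<Rightarrow> int" where
  "sgn_int x = (if x > 0 then 1 else if x < 0 then -1 else 0)"

definition curl :: "(nat \<Rightarrow> real^3) \<Rightarrow> int" where
  "curl v = sgn_int (cross3 (v 3 - v 1) (v 5 - v 1) \<bullet> (v 2 - v 1))"

definition open_tri :: "(nat \<Rightarrow> real^3) \<Rightarrow> nat \<Rightarrow> (real^3) set" where
  "open_tri v i = rel_interior (convex hull {vx v (i - 1), vx v i, vx v (i + 1)})"

definition tri_normal :: "(nat \<Rightarrow> real^3) \<Rightarrow> nat \<Rightarrow> real^3" where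
  "tri_normal v i = cross3 (vx v i - vx v (i - 1)) (vx v (i + 1) - vx v i)"

definition height :: "(nat \<Rightarrow> real^3) \<Rightarrow> nat \<Rightarrow> real^3 \<Rightarrow> real" where
  "height v i x = tri_normal v i \<bullet> (x - vx v i)"

definition edge_contrib :: "(nat \<Rightarrow> real^3) \<Rightarrow> nat \<Rightarrow> nat \<Rightarrow> int" where
  "edge_contrib v i j =
     (let p = vx v j; q = vx v (j + 1); sp = height v i p; sq = height v i q;
          x = p + (sp / (sp - sq)) *\<^sub>R (q - p)
      in if sp * sq < 0 \<and> x \<in> open_tri v i
         then sgn_int (tri_normal v i \<bullet> (q - p)) else 0)"

text \<open>The algebraic intersection number is defined when every intersection of
  H with T_i is a transverse crossing of the interior of an edge.\<close>
definition Delta_defined :: "(nat \<Rightarrow> real^3) \<Rightarrow> nat \<Rightarrow> bool" where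
  "Delta_defined v i \<longleftrightarrow>
     (\<forall>j\<in>{1..6}. \<forall>x\<in>edge v j. x \<in> open_tri v i \<longrightarrow>
        height v i (vx v j) * height v i (vx v (j + 1)) < 0)"

definition Delta :: "(nat \<Rightarrow> real^3) \<Rightarrow> nat \<Rightarrow> int option" where
  "Delta v i = (if Delta_defined v i then Some (\<Sum>j\<in>{1..6}. edge_contrib v i j) else None)"

definition JCC :: "(nat \<Rightarrow> real^3) \<Rightarrow> (int \<times> int) option" where
  "JCC v = (case (Delta v 2, Delta v 4, Delta v 6) of
              (Some a, Some b, Some c) \<Rightarrow>
                 Some (a * b * c, a\<^sup>2 * b\<^sup>2 * c\<^sup>2 * curl v)
            | _ \<Rightarrow> None)"

definition dd :: "real \<Rightarrow> real \<Rightarrow> real \<Rightarrow> real" where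
  "dd d1 d2 d3 = sqrt (2*d1\<^sup>2*d2\<^sup>2 + 2*d1\<^sup>2*d3\<^sup>2 + 2*d2\<^sup>2*d3\<^sup>2 - d1^4 - d2^4 - d3^4)"

definition f1 where "f1 d1 d2 d3 t1 t2 t3 = (let d = dd d1 d2 d3 in
  d2 * sqrt (4 - d2\<^sup>2) * sin t2 * (d3 * d - (d1\<^sup>2 - d2\<^sup>2 + d3\<^sup>2) * sqrt (4 - d3\<^sup>2) * cos t3)
  - d3 * sqrt (4 - d3\<^sup>2) * sin t3 * (d2 * d - (d1\<^sup>2 + d2\<^sup>2 - d3\<^sup>2) * sqrt (4 - d2\<^sup>2) * cos t2))"

definition g1 where "g1 d1 d2 d3 t1 t2 t3 = (let d = dd d1 d2 d3 in
  sqrt (4 - d2\<^sup>2) * ((- d1\<^sup>2 + d2\<^sup>2 + d3\<^sup>2) / (2 * d2 * d3) * cos t2 * sin t3 + sin t2 * cos t3)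
  - d * sin t3 / (2 * d3))"

definition h1 where "h1 d1 d2 d3 t1 t2 t3 = (let d = dd d1 d2 d3 in
  sqrt (4 - d3\<^sup>2) * ((- d1\<^sup>2 + d2\<^sup>2 + d3\<^sup>2) / (2 * d2 * d3) * cos t3 * sin t2 + sin t3 * cos t2)
  - d * sin t2 / (2 * d2))"

definition f2 where "f2 d1 d2 d3 t1 t2 t3 = (let d = dd d1 d2 d3 in
  d3 * sqrt (4 - d3\<^sup>2) * sin t3 * (d1 * d - (d1\<^sup>2 + d2\<^sup>2 - d3\<^sup>2) * sqrt (4 - d1\<^sup>2) * cos t1)
  - d1 * sqrt (4 - d1\<^sup>2) * sin t1 * (d3 * d - (- d1\<^sup>2 + d2\<^sup>2 + d3\<^sup>2) * sqrt (4 - d3\<^sup>2) * cos t3))"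

definition g2 where "g2 d1 d2 d3 t1 t2 t3 = (let d = dd d1 d2 d3 in
  sqrt (4 - d3\<^sup>2) * ((d1\<^sup>2 - d2\<^sup>2 + d3\<^sup>2) / (2 * d1 * d3) * cos t3 * sin t1 + sin t3 * cos t1)
  - d * sin t1 / (2 * d1))"

definition h2 where "h2 d1 d2 d3 t1 t2 t3 = (let d = dd d1 d2 d3 in
  sqrt (4 - d1\<^sup>2) * ((d1\<^sup>2 - d2\<^sup>2 + d3\<^sup>2) / (2 * d1 * d3) * cos t1 * sin t3 + sin t1 * cos t3)
  - d * sin t3 / (2 * d3))"

definition f3 where "f3 d1 d2 d3 t1 t2 t3 = (let d = dd d1 d2 d3 in
  d1 * sqrt (4 - d1\<^sup>2) * sin t1 * (d2 * d - (- d1\<^sup>2 + d2\<^sup>2 + d3\<^sup>2) * sqrt (4 - d2\<^sup>2) * cos t2)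
  - d2 * sqrt (4 - d2\<^sup>2) * sin t2 * (d1 * d - (d1\<^sup>2 - d2\<^sup>2 + d3\<^sup>2) * sqrt (4 - d1\<^sup>2) * cos t1))"

definition g3 where "g3 d1 d2 d3 t1 t2 t3 = (let d = dd d1 d2 d3 in
  sqrt (4 - d1\<^sup>2) * ((d1\<^sup>2 + d2\<^sup>2 - d3\<^sup>2) / (2 * d1 * d2) * cos t1 * sin t2 + sin t1 * cos t2)
  - d * sin t2 / (2 * d2))"

definition h3 where "h3 d1 d2 d3 t1 t2 t3 = (let d = dd d1 d2 d3 in
  sqrt (4 - d2\<^sup>2) * ((d1\<^sup>2 + d2\<^sup>2 - d3\<^sup>2) / (2 * d1 * d2) * cos t2 * sin t1 + sin t2 * cos t1)
  - d * sin t1 / (2 * d1))"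

end

theory Submission
  imports Defs
begin

(* Each of the nine functions is, up to a factor of known sign, the orientation determinant of
   four vertices of H: in standard position this is a polynomial identity in the coordinates
   given by the action-angle description.  The intersection numbers control these orientations.
   A nonzero contribution of the edge e_j to Delta_i means that e_j pierces the triangle T_i,
   which fixes the signs of the five determinants formed by T_i and e_j, and only the two edges
   sharing no vertex with T_i can do so.  Together with curl(H) = 1, the condition
   Delta_2 Delta_4 Delta_6 = -1 leaves a single consistent configuration,
   Delta_2 = Delta_4 = Delta_6 = -1 with T_2, T_4, T_6 pierced by e_5, e_1, e_3, and it gives
   exactly the required signs. *)

section \<open>Orientation determinants\<close>

definition orient :: "real^3 \<Rightarrow> real^3 \<Rightarrow> real^3 \<Rightarrow> real^3 \<Rightarrow> real" where
  "orient a b c d = cross3 (b - a) (c - a) \<bullet> (d - a)"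

lemma orient_vertex [simp]: "orient a b c a = 0" "orient a b c b = 0" "orient a b c c = 0"
  by (simp_all add: orient_def cross3_simps)

lemma orient_swap:
  "orient b a c d = - orient a b c d"
  "orient a c b d = - orient a b c d"
  "orient a b d c = - orient a b c d"
  by (simp_all add: orient_def cross3_simps)

lemma orient_rotate3: "orient b c a d = orient a b c d"
  by (simp add: orient_def cross3_simps)

lemma orient_real3: "orient p q r s =
  (q$1 - p$1) * ((r$2 - p$2) * (s$3 - p$3) - (r$3 - p$3) * (s$2 - p$2))
  - (q$2 - p$2) * ((r$1 - p$1) * (s$3 - p$3) - (r$3 - p$3) * (s$1 - p$1))
  + (q$3 - p$3) * ((r$1 - p$1) * (s$2 - p$2) - (r$2 - p$2) * (s$1 - p$1))"
  by (simp add: orient_def cross3_simps)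

lemma orient_collinear:
  assumes "collinear {a, b, c}" shows "orient a b c p = 0"
  using assms unfolding collinear_3_expand
proof
  assume "a = c" then show ?thesis by (simp add: orient_def cross3_simps)
next
  assume "\<exists>u. b = u *\<^sub>R a + (1 - u) *\<^sub>R c"
  then obtain u where b: "b = u *\<^sub>R a + (1 - u) *\<^sub>R c" by blast
  show ?thesis unfolding b by (simp add: orient_def cross3_simps)
qed

lemma orient_index_sort:
  fixes v :: "nat \<Rightarrow> real^3"
  assumes "j < i"
  shows "orient (v i) (v j) p q = - orient (v j) (v i) p q"
    and "orient p (v i) (v j) q = - orient p (v j) (v i) q"
    and "orient p q (v i) (v j) = - orient p q (v j) (v i)"
  by (rule orient_swap)+

lemma orient_combination:
  assumes "l *\<^sub>R (q - p) = \<alpha> *\<^sub>R (a - p) + \<beta> *\<^sub>R (b - p) + \<gamma> *\<^sub>R (c - p)"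
  shows "l * orient p q a b = - \<gamma> * orient a b c p"
proof -
  have "l * orient p q a b = cross3 (l *\<^sub>R (q - p)) (a - p) \<bullet> (b - p)"
    by (simp add: orient_def cross_mult_left)
  also have "\<dots> = - \<gamma> * orient a b c p"
    unfolding assms by (simp add: orient_def cross3_simps)
  finally show ?thesis .
qed

(* The segment [p, q] crosses the triangle abc from the negative to the positive side of its
   oriented plane (s = 1), or the other way round (s = -1). *)
definition pierces ::
    "real \<Rightarrow> real^3 \<Rightarrow> real^3 \<Rightarrow> real^3 \<Rightarrow> real^3 \<Rightarrow> real^3 \<Rightarrow> bool" where
  "pierces s a b c p q \<longleftrightarrow>
     s * orient a b c p < 0 \<and> 0 < s * orient a b c q \<and>
     0 < s * orient p q a b \<and> 0 < s * orient p q b c \<and> 0 < s * orient p q c a"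

lemma pierces_if_crossing_point_in_triangle:
  fixes a b c p q :: "real^3"
  defines "hp \<equiv> orient a b c p" and "hq \<equiv> orient a b c q"
  assumes opposite: "hp * hq < 0"
    and inside: "p + (hp / (hp - hq)) *\<^sub>R (q - p) \<in> rel_interior (convex hull {a, b, c})"
  shows "pierces (sgn hq) a b c p q"
proof -
  have "\<not> collinear {a, b, c}"
    using orient_collinear opposite hp_def by fastforce
  then have indep: "\<not> affine_dependent {a, b, c}" and distinct: "a \<noteq> b" "a \<noteq> c" "b \<noteq> c"
    using collinear_3_eq_affine_dependent by blast+
  define l where "l = hp / (hp - hq)"
  obtain u where u_pos: "\<forall>x\<in>{a, b, c}. 0 < u x" and "sum u {a, b, c} = 1"
    and "(\<Sum>x\<in>{a, b, c}. u x *\<^sub>R x) = p + l *\<^sub>R (q - p)"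
    using inside unfolding rel_interior_convex_hull_explicit[OF indep] l_def by blast
  with distinct have "u a + u b + u c = 1"
    and "u a *\<^sub>R a + u b *\<^sub>R b + u c *\<^sub>R c = p + l *\<^sub>R (q - p)"
    by (simp_all add: add.assoc)
  then have comb: "l *\<^sub>R (q - p) = u a *\<^sub>R (a - p) + u b *\<^sub>R (b - p) + u c *\<^sub>R (c - p)"
    by (simp add: algebra_simps flip: scaleR_left_distrib)
  have l_pos: "0 < l"
    using opposite unfolding l_def by (auto simp: mult_less_0_iff divide_pos_pos divide_neg_neg)
  have sign: "0 < hq * D" if "l * D = - w * hp" "0 < w" for w D
  proof -
    have "l * (hq * D) = - w * (hp * hq)"
      using that(1) by (metis mult.left_commute mult.commute mult_minus_left)
    also have "\<dots> > 0" using that(2) opposite by (simp add: mult_pos_neg)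
    finally show ?thesis using l_pos by (simp add: zero_less_mult_iff)
  qed
  \<comment> \<open>In barycentric coordinates u of the crossing point, each side orientation is -u_k hp / l.\<close>
  have "l * orient p q a b = - u c * orient a b c p"
    by (rule orient_combination[OF comb])
  moreover have "l * orient p q b c = - u a * orient b c a p"
    by (rule orient_combination[of l q p "u b" b "u c" c "u a" a])
      (use comb in \<open>simp add: algebra_simps\<close>)
  moreover have "l * orient p q c a = - u b * orient c a b p"
    by (rule orient_combination[of l q p "u c" c "u a" a "u b" b])
      (use comb in \<open>simp add: algebra_simps\<close>)
  moreover have "orient b c a p = hp" "orient c a b p = hp"
    by (simp_all add: hp_def orient_rotate3)
  ultimately have "0 < hq * orient p q a b" "0 < hq * orient p q b c" "0 < hq * orient p q c a"
    using sign u_pos by (auto simp: hp_def)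
  then show ?thesis
    using opposite by (auto simp: pierces_def sgn_if hq_def hp_def mult_less_0_iff zero_less_mult_iff)
qed

section \<open>Intersection numbers and piercing edges\<close>

lemma sum_periodic_window:
  fixes f :: "nat \<Rightarrow> 'a::cancel_comm_monoid_add"
  assumes "\<And>j. f (j + n) = f j"
  shows "sum f {k..<k + n} = sum f {..<n}"
proof (induction k)
  case (Suc k)
  have "sum f {k..<k + n} + f k = sum f {k..<Suc (k + n)}"
    using assms[of k] by (simp add: add.commute)
  also have "\<dots> = sum f {Suc k..<Suc k + n} + f k"
    by (simp add: sum.atLeast_Suc_lessThan add_ac)
  finally show ?case using Suc by simp
qed (simp add: lessThan_atLeast0)

lemma vx_add6: "vx v (n + 6) = vx v n"
proof -
  have "(n + 6 + 5) mod 6 = (n + 5) mod 6" by presburger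
  then show ?thesis by (simp only: vx_def)
qed

lemma vx_eq_self: "1 \<le> n \<Longrightarrow> n \<le> 6 \<Longrightarrow> vx v n = v n"
proof -
  assume "1 \<le> n" "n \<le> 6"
  then have "(n + 5) mod 6 + 1 = n" by presburger
  then show ?thesis by (simp only: vx_def)
qed

lemma vx_numeral [simp]:
  "vx v 1 = v 1" "vx v 2 = v 2" "vx v 3 = v 3" "vx v 4 = v 4" "vx v 5 = v 5" "vx v 6 = v 6"
  "vx v 7 = v 1" "vx v 8 = v 2" "vx v 9 = v 3" "vx v 10 = v 4"
  using vx_add6[of v 1] vx_add6[of v 2] vx_add6[of v 3] vx_add6[of v 4] by (simp_all add: vx_eq_self)

lemma height_eq_orient: "height v i x = orient (vx v (i - 1)) (vx v i) (vx v (i + 1)) x"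
  by (simp add: height_def tri_normal_def orient_def cross3_simps)

lemma tri_normal_inner_eq_height_diff: "tri_normal v i \<bullet> (q - p) = height v i q - height v i p"
  by (simp add: height_def inner_diff_right)

lemma edge_contrib_periodic: "edge_contrib v i (j + 6) = edge_contrib v i j"
  using vx_add6[of v j] vx_add6[of v "j + 1"] by (simp add: edge_contrib_def)

lemma edge_contrib_range: "edge_contrib v i j \<in> {-1, 0, 1}"
  by (simp add: edge_contrib_def Let_def sgn_int_def)

lemma edge_contrib_shared_vertex:
  assumes "vx v j \<in> {vx v (i - 1), vx v i, vx v (i + 1)} \<or>
    vx v (j + 1) \<in> {vx v (i - 1), vx v i, vx v (i + 1)}"
  shows "edge_contrib v i j = 0"
  using assms by (auto simp: edge_contrib_def Let_def height_eq_orient)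

lemma of_int_sgn_int: "of_int (sgn_int x) = sgn x"
  by (simp add: sgn_int_def sgn_if)

lemma edge_contrib_pierces:
  assumes "edge_contrib v i j \<noteq> 0"
  shows "pierces (edge_contrib v i j) (vx v (i - 1)) (vx v i) (vx v (i + 1)) (vx v j) (vx v (j + 1))"
proof -
  let ?h = "height v i"
  have opposite: "?h (vx v j) * ?h (vx v (j + 1)) < 0"
    and inside: "vx v j + (?h (vx v j) / (?h (vx v j) - ?h (vx v (j + 1)))) *\<^sub>R (vx v (j + 1) - vx v j)
      \<in> open_tri v i"
    and contrib: "edge_contrib v i j = sgn_int (?h (vx v (j + 1)) - ?h (vx v j))"
    using assms by (auto simp: edge_contrib_def Let_def tri_normal_inner_eq_height_diff split: if_splits)
  have "sgn (?h (vx v (j + 1)) - ?h (vx v j)) = sgn (?h (vx v (j + 1)))"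
    using opposite by (auto simp: sgn_if mult_less_0_iff)
  with contrib have "real_of_int (edge_contrib v i j) = sgn (?h (vx v (j + 1)))"
    by (simp add: of_int_sgn_int)
  then show ?thesis
    using pierces_if_crossing_point_in_triangle opposite inside
    by (simp add: height_eq_orient open_tri_def)
qed

lemma Delta_unit_pierces:
  assumes "Delta v (i + 1) = Some s" and "s = 1 \<or> s = -1"
  shows "pierces s (vx v i) (vx v (i + 1)) (vx v (i + 2)) (vx v (i + 3)) (vx v (i + 4)) \<or>
         pierces s (vx v i) (vx v (i + 1)) (vx v (i + 2)) (vx v (i + 4)) (vx v (i + 5))"
proof -
  let ?c = "edge_contrib v (i + 1)"
  have "{1..<1 + 6} = {1..6::nat}" by auto
  then have "s = sum ?c {1..<1 + 6}"
    using assms(1) by (simp add: Delta_def split: if_splits)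
  also have "\<dots> = sum ?c {i..<i + 6}"
    by (simp only: sum_periodic_window edge_contrib_periodic)
  also have "\<dots> = ?c i + ?c (i + 1) + ?c (i + 2) + ?c (i + 3) + ?c (i + 4) + ?c (i + 5)"
    by (simp add: numeral_eq_Suc add_ac)
  also have "\<dots> = ?c (i + 3) + ?c (i + 4)"
    \<comment> \<open>the other four edges share a vertex with the triangle\<close>
  proof -
    have "?c i = 0" "?c (i + 1) = 0" "?c (i + 2) = 0" "?c (i + 5) = 0"
      using vx_add6[of v i] by (auto intro!: edge_contrib_shared_vertex simp: ac_simps)
    then show ?thesis by simp
  qed
  finally have "s = ?c (i + 3) + ?c (i + 4)" .
  then have "?c (i + 3) = s \<or> ?c (i + 4) = s"
    using edge_contrib_range[of v "i + 1" "i + 3"] edge_contrib_range[of v "i + 1" "i + 4"] assms(2)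
    by auto
  moreover have "s \<noteq> 0" and "i + 1 - 1 = i" and "i + 1 + 1 = i + 2"
    and "i + 3 + 1 = i + 4" and "i + 4 + 1 = i + 5"
    using assms(2) by auto
  ultimately show ?thesis
    using edge_contrib_pierces[of v "i + 1" "i + 3"] edge_contrib_pierces[of v "i + 1" "i + 4"]
    by metis
qed

lemma JCC_minus_one_one_orientations:
  assumes "JCC v = Some (-1, 1)"
  shows "orient (v 1) (v 3) (v 4) (v 6) > 0 \<and> orient (v 1) (v 4) (v 5) (v 6) < 0 \<and>
    orient (v 3) (v 4) (v 5) (v 6) < 0 \<and> orient (v 2) (v 3) (v 5) (v 6) < 0 \<and>
    orient (v 1) (v 2) (v 3) (v 6) < 0 \<and> orient (v 1) (v 2) (v 5) (v 6) < 0 \<and>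
    orient (v 1) (v 2) (v 4) (v 5) < 0 \<and> orient (v 2) (v 3) (v 4) (v 5) > 0 \<and>
    orient (v 1) (v 2) (v 3) (v 4) < 0"
proof -
  obtain a b c where Deltas: "Delta v 2 = Some a" "Delta v 4 = Some b" "Delta v 6 = Some c"
    and prod: "a * b * c = -1" and curl: "a\<^sup>2 * b\<^sup>2 * c\<^sup>2 * curl v = 1"
    using assms by (auto simp: JCC_def split: option.splits)
  from prod have units: "a = 1 \<or> a = -1" "b = 1 \<or> b = -1" "c = 1 \<or> c = -1"
    by (auto simp: zmult_eq_neg1_iff zmult_eq_1_iff)
  with curl have "curl v = 1" by auto
  moreover have "cross3 (v 3 - v 1) (v 5 - v 1) \<bullet> (v 2 - v 1) = orient (v 1) (v 2) (v 3) (v 5)"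
    by (simp add: orient_def cross3_simps)
  ultimately have curl_orient: "orient (v 1) (v 2) (v 3) (v 5) > 0"
    by (simp add: curl_def sgn_int_def split: if_splits)
  have T2: "pierces a (v 1) (v 2) (v 3) (v 4) (v 5) \<or> pierces a (v 1) (v 2) (v 3) (v 5) (v 6)"
    using Delta_unit_pierces[of v 1 a] Deltas(1) units(1) by (simp del: One_nat_def)
  have T4: "pierces b (v 3) (v 4) (v 5) (v 6) (v 1) \<or> pierces b (v 3) (v 4) (v 5) (v 1) (v 2)"
    using Delta_unit_pierces[of v 3 b] Deltas(2) units(2) by simp
  have T6: "pierces c (v 5) (v 6) (v 1) (v 2) (v 3) \<or> pierces c (v 5) (v 6) (v 1) (v 3) (v 4)"
    using Delta_unit_pierces[of v 5 c] Deltas(3) units(3) by simp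
  note normalise = pierces_def of_int_1 of_int_minus orient_index_sort rel_simps
  from prod units consider "a = 1" "b = 1" "c = -1" | "a = 1" "b = -1" "c = 1"
    | "a = -1" "b = 1" "c = 1" | "a = -1" "b = -1" "c = -1"
    by auto
  then show ?thesis
  proof cases
    case 1
    then show ?thesis using T2 T4 T6 curl_orient by (simp only: normalise) argo
  next
    case 2
    then show ?thesis using T2 T4 T6 curl_orient by (simp only: normalise) argo
  next
    case 3
    then show ?thesis using T2 T4 T6 curl_orient by (simp only: normalise) argo
  next
    case 4
    then show ?thesis using T2 T4 T6 curl_orient by (simp only: normalise) argo
  qed
qed

section \<open>The action-angle functions as orientation determinants\<close>

lemma perp_toward_eqI:
  assumes "c - a - ((c - a) \<bullet> (b - a) / ((b - a) \<bullet> (b - a))) *\<^sub>R (b - a) = K *\<^sub>R u"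
    and "0 < K" and "norm u = 1"
  shows "perp_toward a b c = u"
  using assms by (simp add: perp_toward_def)

lemma norm_vector_3: "norm (vector [x, y, z] :: real^3) = sqrt (x\<^sup>2 + y\<^sup>2 + z\<^sup>2)"
  by (simp add: norm_eq_sqrt_inner inner_vec_def sum_3 power2_eq_square)

lemma perp_toward_standard_triangle:
  fixes a x y d2 d3 :: real
  assumes "0 < a" and "0 < y"
    and d2: "0 < d2" "d2\<^sup>2 = (x - a)\<^sup>2 + y\<^sup>2" and d3: "0 < d3" "d3\<^sup>2 = x\<^sup>2 + y\<^sup>2"
  defines "A \<equiv> vector [a, 0, 0] :: real^3" and "B \<equiv> vector [x, y, 0] :: real^3"
  shows "perp_toward 0 A B = vector [0, 1, 0]"
    and "perp_toward A B 0 = vector [- y / d2, (x - a) / d2, 0]"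
    and "perp_toward B 0 A = vector [y / d3, - x / d3, 0]"
proof -
  show "perp_toward 0 A B = vector [0, 1, 0]"
    by (rule perp_toward_eqI[where K = y])
      (use assms(1,2) in
        \<open>auto simp: A_def B_def vec_eq_iff forall_3 inner_vec_def sum_3 norm_vector_3\<close>)
  show "perp_toward A B 0 = vector [- y / d2, (x - a) / d2, 0]"
  proof (rule perp_toward_eqI[where K = "a * y / d2"])
    have "(B - A) \<bullet> (B - A) = d2\<^sup>2"
      unfolding d2(2) by (simp add: A_def B_def inner_vec_def sum_3 power2_eq_square)
    then show "0 - A - ((0 - A) \<bullet> (B - A) / ((B - A) \<bullet> (B - A))) *\<^sub>R (B - A) =
      (a * y / d2) *\<^sub>R vector [- y / d2, (x - a) / d2, 0]"
      using d2 unfolding A_def B_def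
      by (simp add: vec_eq_iff forall_3 inner_vec_def sum_3 field_simps power2_eq_square) algebra
  qed (use assms in \<open>simp_all add: norm_vector_3 power_divide add_divide_distrib[symmetric]\<close>)
  show "perp_toward B 0 A = vector [y / d3, - x / d3, 0]"
  proof (rule perp_toward_eqI[where K = "a * y / d3"])
    have "(0 - B) \<bullet> (0 - B) = d3\<^sup>2"
      unfolding d3(2) by (simp add: B_def inner_vec_def sum_3 power2_eq_square)
    then show "A - B - ((A - B) \<bullet> (0 - B) / ((0 - B) \<bullet> (0 - B))) *\<^sub>R (0 - B) =
      (a * y / d3) *\<^sub>R vector [y / d3, - x / d3, 0]"
      using d3 unfolding A_def B_def
      by (simp add: vec_eq_iff forall_3 inner_vec_def sum_3 field_simps power2_eq_square) algebra
  qed (use assms in \<open>simp_all add: norm_vector_3 power_divide add_divide_distrib[symmetric]\<close>)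
qed

lemma dist_real3: "dist (p :: real^3) q = sqrt ((p$1 - q$1)\<^sup>2 + (p$2 - q$2)\<^sup>2 + (p$3 - q$3)\<^sup>2)"
  by (simp add: dist_norm norm_eq_sqrt_inner inner_vec_def sum_3 power2_eq_square)

(* Heron: dd is four times the area of the triangle v_1 v_3 v_5. *)
lemma dd_standard_triangle:
  fixes a x y d2 d3 :: real
  assumes "0 < a" and "0 < y" and "d2\<^sup>2 = (x - a)\<^sup>2 + y\<^sup>2" and "d3\<^sup>2 = x\<^sup>2 + y\<^sup>2"
  shows "dd a d2 d3 = 2 * a * y"
proof -
  have "2*a\<^sup>2*d2\<^sup>2 + 2*a\<^sup>2*d3\<^sup>2 + 2*d2\<^sup>2*d3\<^sup>2 - a^4 - d2^4 - d3^4
      = 2*a\<^sup>2*d2\<^sup>2 + 2*a\<^sup>2*d3\<^sup>2 + 2*d2\<^sup>2*d3\<^sup>2 - a^4 - (d2\<^sup>2)\<^sup>2 - (d3\<^sup>2)\<^sup>2"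
    by simp
  also have "\<dots> = (2 * a * y)\<^sup>2"
    unfolding assms(3,4) by algebra
  finally show ?thesis
    using assms(1,2) by (simp add: dd_def)
qed

lemma standard_position_coordinates:
  fixes v :: "nat \<Rightarrow> real^3"
  assumes "standard_position v"
    and "d1 = dist (v 3) (v 1)" and "d2 = dist (v 5) (v 3)" and "d3 = dist (v 1) (v 5)"
    and "0 < d2" and "0 < d3"
    and "angle_coord (v 1) (v 3) (v 5) (v 2) d1 t1"
    and "angle_coord (v 3) (v 5) (v 1) (v 4) d2 t2"
    and "angle_coord (v 5) (v 1) (v 3) (v 6) d3 t3"
  obtains x y where "0 < d1" and "0 < y"
    and "d2\<^sup>2 = (x - d1)\<^sup>2 + y\<^sup>2" and "d3\<^sup>2 = x\<^sup>2 + y\<^sup>2"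
    and "v 1 = 0" and "v 3 = vector [d1, 0, 0]" and "v 5 = vector [x, y, 0]"
    and "v 2 = vector [d1 / 2, sqrt (4 - d1\<^sup>2) / 2 * cos t1, sqrt (4 - d1\<^sup>2) / 2 * sin t1]"
    and "v 4 = vector [(d1 + x) / 2 - sqrt (4 - d2\<^sup>2) / 2 * cos t2 * y / d2,
                       y / 2 + sqrt (4 - d2\<^sup>2) / 2 * cos t2 * (x - d1) / d2,
                       sqrt (4 - d2\<^sup>2) / 2 * sin t2]"
    and "v 6 = vector [x / 2 + sqrt (4 - d3\<^sup>2) / 2 * cos t3 * y / d3,
                       y / 2 - sqrt (4 - d3\<^sup>2) / 2 * cos t3 * x / d3,
                       sqrt (4 - d3\<^sup>2) / 2 * sin t3]"
proof -
  define a x y where "a = v 3 $ 1" and "x = v 5 $ 1" and "y = v 5 $ 2"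
  have v1: "v 1 = 0" and "0 < a" and "0 < y"
    using assms(1) by (auto simp: standard_position_def a_def y_def)
  moreover have "v 3 = vector [a, 0, 0]" and v5: "v 5 = vector [x, y, 0]"
    using assms(1) by (auto simp: standard_position_def vec_eq_iff forall_3 a_def x_def y_def)
  moreover have "d1 = a"
    using assms(2) \<open>0 < a\<close> unfolding v1 \<open>v 3 = vector [a, 0, 0]\<close> by (simp add: dist_real3)
  ultimately have d1: "0 < d1" and v3: "v 3 = vector [d1, 0, 0]"
    by simp_all
  have "d2\<^sup>2 = (x - d1)\<^sup>2 + y\<^sup>2" and "d3\<^sup>2 = x\<^sup>2 + y\<^sup>2"
    using assms(3,4) unfolding v1 v3 v5 by (simp_all add: dist_real3 power2_commute[of x])
  note dists = this
  note perps =
    perp_toward_standard_triangle[OF d1 \<open>0 < y\<close> \<open>0 < d2\<close> dists(1) \<open>0 < d3\<close> dists(2)]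
  note angles = assms(7-9)[unfolded v1 v3 v5 perps angle_coord_def midpoint_def ez_def]
  show ?thesis
    by (rule that[OF d1 \<open>0 < y\<close> dists v1 v3 v5])
      (use angles assms(5,6) in \<open>simp_all add: vec_eq_iff forall_3 field_simps\<close>)
qed

lemma action_angle_functions_in_coordinates:
  fixes v :: "nat \<Rightarrow> real^3" and d1 d2 d3 x y t1 t2 t3 :: real
  defines "S1 \<equiv> sqrt (4 - d1\<^sup>2)" and "S2 \<equiv> sqrt (4 - d2\<^sup>2)" and "S3 \<equiv> sqrt (4 - d3\<^sup>2)"
  assumes "v 5 = vector [x, y, 0]" and "v 1 = 0" and "v 3 = vector [d1, 0, 0]"
    and "0 < d1" and "0 < y"
    and d2: "d2\<^sup>2 = (x - d1)\<^sup>2 + y\<^sup>2" and d3: "d3\<^sup>2 = x\<^sup>2 + y\<^sup>2"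
    and "v 2 = vector [d1 / 2, S1 / 2 * cos t1, S1 / 2 * sin t1]"
    and "v 4 = vector [(d1 + x) / 2 - S2 / 2 * cos t2 * y / d2,
                       y / 2 + S2 / 2 * cos t2 * (x - d1) / d2, S2 / 2 * sin t2]"
    and "v 6 = vector [x / 2 + S3 / 2 * cos t3 * y / d3,
                       y / 2 - S3 / 2 * cos t3 * x / d3, S3 / 2 * sin t3]"
  shows "f1 d1 d2 d3 t1 t2 t3 = -8 * d2 * d3 * orient (v 1) (v 3) (v 4) (v 6)"
    and "g1 d1 d2 d3 t1 t2 t3 * (d3 * S3) = -4 * orient (v 1) (v 4) (v 5) (v 6)"
    and "h1 d1 d2 d3 t1 t2 t3 * (d2 * S2) = -4 * orient (v 3) (v 4) (v 5) (v 6)"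
    and "f2 d1 d2 d3 t1 t2 t3 = 8 * d1 * d3 * orient (v 2) (v 3) (v 5) (v 6)"
    and "g2 d1 d2 d3 t1 t2 t3 * (d1 * S1) = -4 * orient (v 1) (v 2) (v 3) (v 6)"
    and "h2 d1 d2 d3 t1 t2 t3 * (d3 * S3) = -4 * orient (v 1) (v 2) (v 5) (v 6)"
    and "f3 d1 d2 d3 t1 t2 t3 = 8 * d1 * d2 * orient (v 1) (v 2) (v 4) (v 5)"
    and "g3 d1 d2 d3 t1 t2 t3 * (d2 * S2) = 4 * orient (v 2) (v 3) (v 4) (v 5)"
    and "h3 d1 d2 d3 t1 t2 t3 * (d1 * S1) = -4 * orient (v 1) (v 2) (v 3) (v 4)"
proof -
  have "d2 \<noteq> 0" "d3 \<noteq> 0"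
    using d2 d3 \<open>0 < y\<close> by (auto simp: add_nonneg_pos)
  then have inverses: "d1 * inverse d1 = 1" "d2 * inverse d2 = 1" "d3 * inverse d3 = 1"
    using \<open>0 < d1\<close> by auto
  define h where "h = inverse (2::real)"
  have half: "2 * h = 1" by (simp add: h_def)
  note expand = Let_def dd_standard_triangle[OF assms(7,8) d2 d3] orient_real3 assms(4-6,11-13)
    vector_3 zero_index divide_inverse inverse_mult_distrib
    h_def[symmetric] S1_def[symmetric] S2_def[symmetric] S3_def[symmetric]
  show "f1 d1 d2 d3 t1 t2 t3 = -8 * d2 * d3 * orient (v 1) (v 3) (v 4) (v 6)"
    unfolding f1_def expand using d2 d3 inverses half by algebra
  show "g1 d1 d2 d3 t1 t2 t3 * (d3 * S3) = -4 * orient (v 1) (v 4) (v 5) (v 6)"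
    unfolding g1_def expand using d2 d3 inverses half by algebra
  show "h1 d1 d2 d3 t1 t2 t3 * (d2 * S2) = -4 * orient (v 3) (v 4) (v 5) (v 6)"
    unfolding h1_def expand using d2 d3 inverses half by algebra
  show "f2 d1 d2 d3 t1 t2 t3 = 8 * d1 * d3 * orient (v 2) (v 3) (v 5) (v 6)"
    unfolding f2_def expand using d2 d3 inverses half by algebra
  show "g2 d1 d2 d3 t1 t2 t3 * (d1 * S1) = -4 * orient (v 1) (v 2) (v 3) (v 6)"
    unfolding g2_def expand using d2 d3 inverses half by algebra
  show "h2 d1 d2 d3 t1 t2 t3 * (d3 * S3) = -4 * orient (v 1) (v 2) (v 5) (v 6)"
    unfolding h2_def expand using d2 d3 inverses half by algebra
  show "f3 d1 d2 d3 t1 t2 t3 = 8 * d1 * d2 * orient (v 1) (v 2) (v 4) (v 5)"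
    unfolding f3_def expand using d2 d3 inverses half by algebra
  show "g3 d1 d2 d3 t1 t2 t3 * (d2 * S2) = 4 * orient (v 2) (v 3) (v 4) (v 5)"
    unfolding g3_def expand using d2 d3 inverses half by algebra
  show "h3 d1 d2 d3 t1 t2 t3 * (d1 * S1) = -4 * orient (v 1) (v 2) (v 3) (v 4)"
    unfolding h3_def expand using d2 d3 inverses half by algebra
qed

lemma action_angle_functions_eq_orient:
  fixes v :: "nat \<Rightarrow> real^3"
  assumes "standard_position v"
    and "d1 = dist (v 3) (v 1)" and "d2 = dist (v 5) (v 3)" and "d3 = dist (v 1) (v 5)"
    and "0 < d2" and "0 < d3"
    and "angle_coord (v 1) (v 3) (v 5) (v 2) d1 t1"
    and "angle_coord (v 3) (v 5) (v 1) (v 4) d2 t2"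
    and "angle_coord (v 5) (v 1) (v 3) (v 6) d3 t3"
  shows "f1 d1 d2 d3 t1 t2 t3 = -8 * d2 * d3 * orient (v 1) (v 3) (v 4) (v 6)"
    and "g1 d1 d2 d3 t1 t2 t3 * (d3 * sqrt (4 - d3\<^sup>2)) = -4 * orient (v 1) (v 4) (v 5) (v 6)"
    and "h1 d1 d2 d3 t1 t2 t3 * (d2 * sqrt (4 - d2\<^sup>2)) = -4 * orient (v 3) (v 4) (v 5) (v 6)"
    and "f2 d1 d2 d3 t1 t2 t3 = 8 * d1 * d3 * orient (v 2) (v 3) (v 5) (v 6)"
    and "g2 d1 d2 d3 t1 t2 t3 * (d1 * sqrt (4 - d1\<^sup>2)) = -4 * orient (v 1) (v 2) (v 3) (v 6)"
    and "h2 d1 d2 d3 t1 t2 t3 * (d3 * sqrt (4 - d3\<^sup>2)) = -4 * orient (v 1) (v 2) (v 5) (v 6)"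
    and "f3 d1 d2 d3 t1 t2 t3 = 8 * d1 * d2 * orient (v 1) (v 2) (v 4) (v 5)"
    and "g3 d1 d2 d3 t1 t2 t3 * (d2 * sqrt (4 - d2\<^sup>2)) = 4 * orient (v 2) (v 3) (v 4) (v 5)"
    and "h3 d1 d2 d3 t1 t2 t3 * (d1 * sqrt (4 - d1\<^sup>2)) = -4 * orient (v 1) (v 2) (v 3) (v 4)"
  using standard_position_coordinates[OF assms]
  by (metis action_angle_functions_in_coordinates)+

theorem mainTheorem8:
  fixes v :: "nat \<Rightarrow> real^3" and d1 d2 d3 t1 t2 t3 :: real
  assumes "equilateral_hex v" and "embedded_hex v" and "standard_position v"
    and "\<not> collinear {v 1, v 3, v 5}"
    and "d1 = dist (v 3) (v 1)" and "d2 = dist (v 5) (v 3)" and "d3 = dist (v 1) (v 5)"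
    and "0 < d1" and "d1 < 2" and "0 < d2" and "d2 < 2" and "0 < d3" and "d3 < 2"
    and "angle_coord (v 1) (v 3) (v 5) (v 2) d1 t1"
    and "angle_coord (v 3) (v 5) (v 1) (v 4) d2 t2"
    and "angle_coord (v 5) (v 1) (v 3) (v 6) d3 t3"
    and "JCC v = Some (-1, 1)"
  shows "f1 d1 d2 d3 t1 t2 t3 < 0 \<and> g1 d1 d2 d3 t1 t2 t3 > 0 \<and> h1 d1 d2 d3 t1 t2 t3 > 0 \<and>
         f2 d1 d2 d3 t1 t2 t3 < 0 \<and> g2 d1 d2 d3 t1 t2 t3 > 0 \<and> h2 d1 d2 d3 t1 t2 t3 > 0 \<and>
         f3 d1 d2 d3 t1 t2 t3 < 0 \<and> g3 d1 d2 d3 t1 t2 t3 > 0 \<and> h3 d1 d2 d3 t1 t2 t3 > 0"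
proof -
  note identities = action_angle_functions_eq_orient[OF assms(3,5-7,10,12,14-16)]
  note signs = JCC_minus_one_one_orientations[OF assms(17)]
  have "0 < d * sqrt (4 - d\<^sup>2)" if "0 < d" "d < 2" for d :: real
    using that by (simp add: power_strict_mono[of d 2 2, simplified])
  then have scales:
      "0 < d1 * sqrt (4 - d1\<^sup>2)" "0 < d2 * sqrt (4 - d2\<^sup>2)" "0 < d3 * sqrt (4 - d3\<^sup>2)"
    using assms(8-13) by blast+
  have factor_pos: "0 < x" if "x * k = c" "0 < k" "0 < c" for x k c :: real
    using that zero_less_mult_pos2 by metis
  show ?thesis
    using signs scales assms(8,10,12)
    by (auto simp: identities(1,4,7) mult_pos_neg mult_neg_pos
        intro!: factor_pos[OF identities(2)] factor_pos[OF identities(3)] factor_pos[OF identities(5)]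
          factor_pos[OF identities(6)] factor_pos[OF identities(8)] factor_pos[OF identities(9)])
qed

end
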